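(* Let $m,n$ be integers with $|m|=|n|\ge2$. Then $\mathrm{BS}(m,n)$ has no primitive transitive action of infinite phenotype.
   Context: $\mathrm{BS}(m,n)=\langle b,t\mid tb^mt^{-1}=b^n\rangle$; right actions. A transitive action with point stabilizer $\Lambda$ has infinite phenotype iff $[\langle b\rangle:\langle b\rangle\cap\Lambda]=\infty$, i.e. iff $b$ acts freely (all $b$-orbits are infinite). An action is primitive if it preserves no equivalence relation other than equality and the full relation. *)

theory Defs
  imports Main
begin

text \<open>An action of BS(m,n) = < b, t | t b^m t^-1 = b^n > on a (nonempty) type 'a is given
by the permutations beta (action of b) and tau (action of t).  We use right actions:
x.b = beta x, x.t = tau x, so x.(g h) = (x.g).h.\<close>

definition zpow :: "('a \<Rightarrow> 'a) \<Rightarrow> int \<Rightarrow> 'a \<Rightarrow> 'a" where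
  "zpow f k = (if 0 \<le> k then f ^^ nat k else (inv f) ^^ nat (- k))"

text \<open>beta, tau define a right action of BS(m,n): bijections with x.(t b^m t^-1) = x.b^n.\<close>
definition BS_action :: "int \<Rightarrow> int \<Rightarrow> ('a \<Rightarrow> 'a) \<Rightarrow> ('a \<Rightarrow> 'a) \<Rightarrow> bool" where
  "BS_action m n beta tau \<longleftrightarrow> bij beta \<and> bij tau \<and>
     (\<forall>x. inv tau (zpow beta m (tau x)) = zpow beta n x)"

definition gen_rel :: "('a \<Rightarrow> 'a) \<Rightarrow> ('a \<Rightarrow> 'a) \<Rightarrow> ('a \<times> 'a) set" where
  "gen_rel beta tau = {(x, beta x) | x. True} \<union> {(x, inv beta x) | x. True}
                    \<union> {(x, tau x) | x. True} \<union> {(x, inv tau x) | x. True}"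

definition transitive_action :: "('a \<Rightarrow> 'a) \<Rightarrow> ('a \<Rightarrow> 'a) \<Rightarrow> bool" where
  "transitive_action beta tau \<longleftrightarrow> (\<forall>x y. (x, y) \<in> (gen_rel beta tau)\<^sup>*)"

definition invariant_rel :: "('a \<Rightarrow> 'a) \<Rightarrow> ('a \<Rightarrow> 'a) \<Rightarrow> ('a \<times> 'a) set \<Rightarrow> bool" where
  "invariant_rel beta tau R \<longleftrightarrow>
     (\<forall>x y. (x, y) \<in> R \<longrightarrow> (beta x, beta y) \<in> R \<and> (inv beta x, inv beta y) \<in> R
                          \<and> (tau x, tau y) \<in> R \<and> (inv tau x, inv tau y) \<in> R)"

definition primitive_action :: "('a \<Rightarrow> 'a) \<Rightarrow> ('a \<Rightarrow> 'a) \<Rightarrow> bool" where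
  "primitive_action beta tau \<longleftrightarrow>
     (\<forall>R. equiv UNIV R \<and> invariant_rel beta tau R \<longrightarrow> R = Id \<or> R = UNIV)"

definition infinite_phenotype :: "('a \<Rightarrow> 'a) \<Rightarrow> bool" where
  "infinite_phenotype beta \<longleftrightarrow> (\<forall>x. infinite (range (\<lambda>k. zpow beta k x)))"

end

theory Submission
  imports Defs
begin

text \<open>Let \<open>R\<close> be the partition of the space into orbits of \<open>\<langle>b\<^sup>m\<rangle>\<close>.  It is preserved by \<open>b\<close>,
which commutes with \<open>b\<^sup>m\<close>, and by \<open>t\<close>, which conjugates \<open>b\<^sup>n\<close> to \<open>b\<^sup>m\<close>, because
\<open>\<langle>b\<^sup>n\<rangle> = \<langle>b\<^sup>m\<rangle>\<close> when \<open>|m| = |n|\<close>.  If \<open>b\<close> acts freely, \<open>R\<close> is neither equality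
(\<open>b\<^sup>m\<close> moves every point) nor everything (\<open>x\<close> and \<open>x.b\<close> would be related,
so some \<open>b\<^sup>m\<^sup>j\<^sup>-\<^sup>1\<close> with \<open>mj \<noteq> 1\<close> fixes \<open>x\<close>), so the action is not primitive.\<close>

lemma zpow_0 [simp]: "zpow f 0 = id"
  by (simp add: zpow_def)

lemma zpow_1 [simp]: "zpow f 1 = f"
  by (simp add: zpow_def)

lemma zpow_minus_1 [simp]: "zpow f (-1) = inv f"
  by (simp add: zpow_def)

lemma zpow_of_nat: "zpow f (int k) = f ^^ k"
  by (simp add: zpow_def)

lemma zpow_minus_of_nat: "zpow f (- int k) = inv f ^^ k"
  by (cases "k = 0") (simp_all add: zpow_def)

lemma zpow_succ:
  assumes "bij f"
  shows "zpow f (a + 1) = f \<circ> zpow f a"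
proof (cases "0 \<le> a")
  case True
  then obtain k where "a = int k"
    by (rule nonneg_int_cases)
  then show ?thesis
    by (metis funpow.simps(2) of_nat_Suc zpow_of_nat add.commute)
next
  case False
  then obtain k where a: "a = - int (Suc k)"
    by (metis neg_int_cases not_le Suc_pred)
  then have "a + 1 = - int k"
    by simp
  then have "zpow f (a + 1) = (f \<circ> inv f) \<circ> inv f ^^ k"
    using bij_is_surj[OF assms] by (simp add: zpow_minus_of_nat surj_iff)
  also have "\<dots> = f \<circ> zpow f a"
    by (simp add: a zpow_minus_of_nat funpow_Suc_right comp_assoc del: of_nat_Suc)
  finally show ?thesis .
qed

lemma zpow_add:
  assumes "bij f"
  shows "zpow f (a + b) x = zpow f b (zpow f a x)"
proof (induction b rule: int_induct[where k = 0])
  case base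
  then show ?case by simp
next
  case (step1 i)
  then show ?case
    using zpow_succ[OF assms, of "a + i"] zpow_succ[OF assms, of i] by (simp add: add.assoc)
next
  case (step2 i)
  have "zpow f (a + i) x = f (zpow f (a + (i - 1)) x)"
    using zpow_succ[OF assms, of "a + (i - 1)"] by simp
  moreover have "zpow f i = f \<circ> zpow f (i - 1)"
    using zpow_succ[OF assms, of "i - 1"] by simp
  ultimately show ?case
    using step2 bij_is_inj[OF assms] by (simp add: inj_eq)
qed

lemma zpow_commute:
  assumes "bij f"
  shows "zpow f a (zpow f b x) = zpow f b (zpow f a x)"
  by (metis zpow_add[OF assms] add.commute)

lemma zpow_minus_cancel:
  assumes "bij f"
  shows "zpow f (- d) (zpow f d x) = x"
  using zpow_add[OF assms, of d "- d" x] by simp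

lemma zpow_mult_fixpoint:
  assumes "bij f" and "zpow f k x = x"
  shows "zpow f (k * q) x = x"
proof (induction q rule: int_induct[where k = 0])
  case base
  then show ?case by simp
next
  case (step1 i)
  then show ?case
    using zpow_add[OF assms(1), of "k * i" k x] assms(2) by (simp add: algebra_simps)
next
  case (step2 i)
  then show ?case
    using zpow_add[OF assms(1), of "k * i" "- k" x] zpow_minus_cancel[OF assms(1), of k x] assms(2)
    by (simp add: algebra_simps)
qed

lemma finite_zpow_orbit_if_periodic:
  assumes "bij f" and "zpow f k x = x" and "k \<noteq> 0"
  shows "finite (range (\<lambda>j. zpow f j x))"
proof (rule finite_subset)
  show "range (\<lambda>j. zpow f j x) \<subseteq> (\<lambda>j. zpow f j x) ` {- \<bar>k\<bar>..\<bar>k\<bar>}"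
  proof clarify
    fix j
    have "zpow f j x = zpow f (j mod k) (zpow f (k * (j div k)) x)"
      by (metis zpow_add[OF assms(1)] mult_div_mod_eq add.commute)
    also have "\<dots> = zpow f (j mod k) x"
      using zpow_mult_fixpoint[OF assms(1,2)] by simp
    finally show "zpow f j x \<in> (\<lambda>j. zpow f j x) ` {- \<bar>k\<bar>..\<bar>k\<bar>}"
      using abs_mod_less[OF assms(3), of j] by (intro image_eqI) auto
  qed
qed simp

lemma zpow_mult_conj:
  assumes "bij f" and conj: "\<And>x. g (zpow f c x) = zpow f d (g x)"
  shows "g (zpow f (c * j) x) = zpow f (d * j) (g x)"
proof (induction j arbitrary: x rule: int_induct[where k = 0])
  case base
  then show ?case by simp
next
  case (step1 i)
  then show ?case
    using zpow_add[OF assms(1), of "c * i" c] zpow_add[OF assms(1), of "d * i" d] conj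
    by (simp add: algebra_simps)
next
  case (step2 i)
  have "zpow f d (g (zpow f (c * (i - 1)) x)) = g (zpow f (c * i) x)"
    using conj zpow_add[OF assms(1), of "c * (i - 1)" c x] by (simp add: algebra_simps)
  also have "\<dots> = zpow f (d * i) (g x)"
    by (rule step2)
  also have "\<dots> = zpow f d (zpow f (d * (i - 1)) (g x))"
    using zpow_add[OF assms(1), of "d * (i - 1)" d] by (simp add: algebra_simps)
  finally show ?case
    by (metis zpow_minus_cancel[OF assms(1)])
qed

definition power_orbit_rel :: "('a \<Rightarrow> 'a) \<Rightarrow> int \<Rightarrow> ('a \<times> 'a) set" where
  "power_orbit_rel f k = {(x, y). \<exists>j. y = zpow f (k * j) x}"

lemma equiv_power_orbit_rel:
  assumes "bij f"
  shows "equiv UNIV (power_orbit_rel f k)"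
proof (rule equivI)
  show "power_orbit_rel f k \<subseteq> UNIV \<times> UNIV"
    by simp
  show "refl (power_orbit_rel f k)"
    unfolding refl_on_def power_orbit_rel_def by (auto intro: exI[of _ 0])
  show "sym (power_orbit_rel f k)"
  proof (rule symI)
    fix x y assume "(x, y) \<in> power_orbit_rel f k"
    then obtain j where "y = zpow f (k * j) x"
      by (auto simp: power_orbit_rel_def)
    then have "x = zpow f (k * - j) y"
      using zpow_minus_cancel[OF assms] by simp
    then show "(y, x) \<in> power_orbit_rel f k"
      unfolding power_orbit_rel_def by blast
  qed
  show "trans (power_orbit_rel f k)"
  proof (rule transI)
    fix x y z assume "(x, y) \<in> power_orbit_rel f k" "(y, z) \<in> power_orbit_rel f k"
    then obtain i j where "y = zpow f (k * i) x" "z = zpow f (k * j) y"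
      by (auto simp: power_orbit_rel_def)
    then have "z = zpow f (k * (i + j)) x"
      by (simp add: zpow_add[OF assms] distrib_left)
    then show "(x, z) \<in> power_orbit_rel f k"
      by (auto simp: power_orbit_rel_def)
  qed
qed

lemma power_orbit_rel_uminus: "power_orbit_rel f (- k) = power_orbit_rel f k"
proof -
  have "(\<exists>j. y = zpow f (- k * j) x) \<longleftrightarrow> (\<exists>j. y = zpow f (k * j) x)" for x y
  proof
    assume "\<exists>j. y = zpow f (- k * j) x"
    then obtain j where "y = zpow f (k * - j) x"
      by auto
    then show "\<exists>j. y = zpow f (k * j) x" ..
  next
    assume "\<exists>j. y = zpow f (k * j) x"
    then obtain j where "y = zpow f (- k * - j) x"
      by auto
    then show "\<exists>j. y = zpow f (- k * j) x" ..
  qed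
  then show ?thesis
    by (simp add: power_orbit_rel_def)
qed

lemma power_orbit_rel_abs_cong:
  assumes "\<bar>c\<bar> = \<bar>d\<bar>"
  shows "power_orbit_rel f c = power_orbit_rel f d"
  using assms power_orbit_rel_uminus by (auto simp: abs_eq_iff)

lemma power_orbit_rel_conj:
  assumes "bij f" and "\<And>x. g (zpow f c x) = zpow f d (g x)"
    and "(x, y) \<in> power_orbit_rel f c"
  shows "(g x, g y) \<in> power_orbit_rel f d"
proof -
  obtain j where "y = zpow f (c * j) x"
    using assms(3) by (auto simp: power_orbit_rel_def)
  then have "g y = zpow f (d * j) (g x)"
    using zpow_mult_conj[of f g c d, OF assms(1,2)] by simp
  then show ?thesis
    by (auto simp: power_orbit_rel_def)
qed

lemma invariant_rel_power_orbit_rel: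
  assumes "BS_action m n beta tau" and "\<bar>m\<bar> = \<bar>n\<bar>"
  shows "invariant_rel beta tau (power_orbit_rel beta m)"
proof -
  have bij: "bij beta" "bij tau"
    using assms(1) by (auto simp: BS_action_def)
  have tau_inv_conj: "inv tau (zpow beta m x) = zpow beta n (inv tau x)" for x
    using assms(1) surj_f_inv_f[OF bij_is_surj[OF bij(2)]] unfolding BS_action_def by metis
  then have tau_conj: "tau (zpow beta n x) = zpow beta m (tau x)" for x
    by (metis bij(2) bij_inv_eq_iff)
  have same_rel: "power_orbit_rel beta n = power_orbit_rel beta m"
    using assms(2) by (rule power_orbit_rel_abs_cong[symmetric])
  show ?thesis
    unfolding invariant_rel_def
  proof (intro allI impI conjI)
    fix x y assume xy: "(x, y) \<in> power_orbit_rel beta m"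
    have "beta (zpow beta m z) = zpow beta m (beta z)" for z
      using zpow_commute[OF bij(1), of 1 m] by simp
    then show "(beta x, beta y) \<in> power_orbit_rel beta m"
      using power_orbit_rel_conj[OF bij(1) _ xy] by blast
    have "inv beta (zpow beta m z) = zpow beta m (inv beta z)" for z
      using zpow_commute[OF bij(1), of "- 1" m] by simp
    then show "(inv beta x, inv beta y) \<in> power_orbit_rel beta m"
      using power_orbit_rel_conj[OF bij(1) _ xy] by blast
    show "(tau x, tau y) \<in> power_orbit_rel beta m"
      using power_orbit_rel_conj[where g = tau, OF bij(1) tau_conj] xy same_rel by simp
    show "(inv tau x, inv tau y) \<in> power_orbit_rel beta m"
      using power_orbit_rel_conj[where g = "inv tau", OF bij(1) tau_inv_conj xy] same_rel by simp
  qed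
qed

lemma infinite_phenotype_zpow_fixpoint:
  assumes "infinite_phenotype f" and "bij f" and "zpow f k x = x"
  shows "k = 0"
proof (rule ccontr)
  assume "k \<noteq> 0"
  with assms(2,3) have "finite (range (\<lambda>j. zpow f j x))"
    by (rule finite_zpow_orbit_if_periodic)
  with assms(1) show False
    by (simp add: infinite_phenotype_def)
qed

lemma power_orbit_rel_neq_Id:
  assumes "infinite_phenotype f" and "bij f" and "k \<noteq> 0"
  shows "power_orbit_rel f k \<noteq> Id"
proof
  fix x
  assume "power_orbit_rel f k = Id"
  moreover have "(x, zpow f (k * 1) x) \<in> power_orbit_rel f k"
    unfolding power_orbit_rel_def by blast
  ultimately have "zpow f k x = x"
    by simp
  then have "k = 0"
    by (rule infinite_phenotype_zpow_fixpoint[OF assms(1,2)])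
  with assms(3) show False ..
qed

lemma power_orbit_rel_neq_UNIV:
  assumes "infinite_phenotype f" and "bij f" and "\<bar>k\<bar> \<noteq> 1"
  shows "power_orbit_rel f k \<noteq> UNIV"
proof
  fix x
  assume "power_orbit_rel f k = UNIV"
  then have "(x, f x) \<in> power_orbit_rel f k"
    by simp
  then obtain j where j: "f x = zpow f (k * j) x"
    unfolding power_orbit_rel_def by blast
  have "zpow f (k * j - 1) x = inv f (f x)"
    using zpow_add[OF assms(2), of "k * j" "- 1" x] j by simp
  then have "zpow f (k * j - 1) x = x"
    using bij_is_inj[OF assms(2)] by simp
  then have "k * j - 1 = 0"
    by (rule infinite_phenotype_zpow_fixpoint[OF assms(1,2)])
  then have "k = 1 \<or> k = - 1"
    by (auto simp: zmult_eq_1_iff)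
  with assms(3) show False
    by auto
qed

theorem mainTheorem16:
  fixes m n :: int and beta tau :: "'a \<Rightarrow> 'a"
  assumes "\<bar>m\<bar> = \<bar>n\<bar>" and "\<bar>m\<bar> \<ge> 2"
  shows "\<not> (BS_action m n beta tau \<and> transitive_action beta tau \<and>
             primitive_action beta tau \<and> infinite_phenotype beta)"
proof
  assume "BS_action m n beta tau \<and> transitive_action beta tau \<and>
          primitive_action beta tau \<and> infinite_phenotype beta"
  then have action: "BS_action m n beta tau" and primitive: "primitive_action beta tau"
    and free: "infinite_phenotype beta"
    by auto
  have "bij beta"
    using action by (simp add: BS_action_def)
  have "power_orbit_rel beta m = Id \<or> power_orbit_rel beta m = UNIV"
    using primitive equiv_power_orbit_rel[OF \<open>bij beta\<close>]
      invariant_rel_power_orbit_rel[OF action assms(1)]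
    by (simp add: primitive_action_def)
  moreover have "m \<noteq> 0" "\<bar>m\<bar> \<noteq> 1"
    using assms(2) by auto
  ultimately show False
    using power_orbit_rel_neq_Id[OF free \<open>bij beta\<close>] power_orbit_rel_neq_UNIV[OF free \<open>bij beta\<close>]
    by blast
qed

end
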